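(* Let $S\subseteq \mathbb{R}^n/\mathbb{R}\mathbb{1}$ be a finite set of points and let $k\le |S|$ be a positive integer. The tropical $k$-means clustering algorithm applied to $S$ with $k$ clusters (described in the context) terminates after finitely many iterations.
   Context: $\mathbb{1}=(1,\dots,1)\in\mathbb{R}^n$, and $\mathbb{R}^n/\mathbb{R}\mathbb{1}$ is the tropical torus. The asymmetric tropical distance is $d_{\Delta}(x,y)=\sum_{i=1}^n (y_i-x_i) + n\max_{i}(x_i-y_i)$ for $x,y\in\mathbb{R}^n$; it is invariant under adding multiples of $\mathbb{1}$ to either argument and so is defined on $\mathbb{R}^n/\mathbb{R}\mathbb{1}$. A tropical linear combination of points $v_1,\dots,v_l\in\mathbb{R}^n$ is a point $\max_i (v_i+\lambda_i\mathbb{1})$ (coordinatewise maximum) with $\lambda_i\in\mathbb{R}$. For a finite set $C\subseteq\mathbb{R}^n/\mathbb{R}\mathbb{1}$, the Fermat--Weber set $\mathrm{FW}(C)$ is the set of points $y\in\mathbb{R}^n/\mathbb{R}\mathbb{1}$ minimizing $\sum_{s\in C} d_\Delta(s,y)$; it is a polytope that is also closed under tropical linear combinations, and it has a unique minimal finite set of points $v_1,\dots,v_l$ (its tropical vertices) such that every point of $\mathrm{FW}(C)$ is a tropical linear combination of $v_1,\dots,v_l$. The tropical median of $C$ is the ordinary componentwise mean $\frac1l\sum_{i=1}^l v_i$ of the tropical vertices. Tropical $k$-means clustering algorithm: choose initial centroids $c_1,\dots,c_k$ (e.g. $k$ points of $S$ chosen at random); then repeat: (A-step) for each $j$, set $C_j$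 to be the set of $s\in S$ with $j=\arg\min_{i\in[k]} d_\Delta(s,c_i)$; (M-step) for each cluster $C_j$, replace $c_j$ by the tropical median of $C_j$; stop when the cluster assignments do not change. *)

theory Defs
  imports "HOL-Analysis.Analysis"
begin

text \<open>Points of the tropical torus R^n / R1 are represented by vectors in R^n
  (type real^'n); all notions below are invariant under adding multiples of 1.\<close>

definition one_vec :: "real^'n" where
  "one_vec = (\<chi> i. 1)"

definition trop_dist :: "real^'n \<Rightarrow> real^'n \<Rightarrow> real" where
  "trop_dist x y = (\<Sum>i\<in>UNIV. y$i - x$i) + real CARD('n) * Max (range (\<lambda>i. x$i - y$i))"

definition FW :: "(real^'n) set \<Rightarrow> (real^'n) set" where
  "FW C = {y. \<forall>z. (\<Sum>s\<in>C. trop_dist s y) \<le> (\<Sum>s\<in>C. trop_dist s z)}"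

definition trop_comb :: "(real^'n) set \<Rightarrow> real^'n \<Rightarrow> bool" where
  "trop_comb V y \<longleftrightarrow> V \<noteq> {} \<and>
     (\<exists>lam :: real^'n \<Rightarrow> real. \<forall>i. y$i = Max ((\<lambda>v. v$i + lam v) ` V))"

text \<open>Canonical representative of a class in R^n/R1: coordinate sum zero.\<close>
definition normalized :: "real^'n \<Rightarrow> bool" where
  "normalized x \<longleftrightarrow> (\<Sum>i\<in>UNIV. x$i) = 0"

definition is_trop_vertex_set :: "(real^'n) set \<Rightarrow> (real^'n) set \<Rightarrow> bool" where
  "is_trop_vertex_set A V \<longleftrightarrow>
     finite V \<and> V \<subseteq> A \<and> (\<forall>v\<in>V. normalized v) \<and>
     (\<forall>y\<in>A. trop_comb V y) \<and>
     (\<forall>W. W \<subset> V \<longrightarrow> \<not> (\<forall>y\<in>A. trop_comb W y))"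

definition trop_vertices :: "(real^'n) set \<Rightarrow> (real^'n) set" where
  "trop_vertices A = (THE V. is_trop_vertex_set A V)"

definition trop_median :: "(real^'n) set \<Rightarrow> real^'n" where
  "trop_median C = (let V = trop_vertices (FW C) in (1 / real (card V)) *\<^sub>R (\<Sum>v\<in>V. v))"

definition assign :: "nat \<Rightarrow> (nat \<Rightarrow> real^'n) \<Rightarrow> real^'n \<Rightarrow> nat" where
  "assign k c s = (LEAST j. j < k \<and> (\<forall>i<k. trop_dist s (c j) \<le> trop_dist s (c i)))"

definition cluster :: "(real^'n) set \<Rightarrow> nat \<Rightarrow> (nat \<Rightarrow> real^'n) \<Rightarrow> nat \<Rightarrow> (real^'n) set" where
  "cluster S k c j = {s \<in> S. assign k c s = j}"

definition kmeans_step :: "(real^'n) set \<Rightarrow> nat \<Rightarrow> (nat \<Rightarrow> real^'n) \<Rightarrow> (nat \<Rightarrow> real^'n)" where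
  "kmeans_step S k c = (\<lambda>j. if j < k \<and> cluster S k c j \<noteq> {}
                            then trop_median (cluster S k c j) else c j)"

definition centroids :: "(real^'n) set \<Rightarrow> nat \<Rightarrow> (nat \<Rightarrow> real^'n) \<Rightarrow> nat \<Rightarrow> (nat \<Rightarrow> real^'n)" where
  "centroids S k c0 t = (kmeans_step S k ^^ t) c0"

definition kmeans_terminates :: "(real^'n) set \<Rightarrow> nat \<Rightarrow> (nat \<Rightarrow> real^'n) \<Rightarrow> bool" where
  "kmeans_terminates S k c0 \<longleftrightarrow>
     (\<exists>t. \<forall>s\<in>S. assign k (centroids S k c0 (Suc t)) s = assign k (centroids S k c0 t) s)"

end

theory Submission
  imports Defs
begin

text \<open>Along the algorithm the clustering cost \<open>\<Sum>\<^sub>s d(s, median of the cluster of s)\<close> never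
  increases: the M-step replaces each centroid by a point of the Fermat--Weber set of its
  cluster, and the A-step only moves points to centroids that are at least as close. If the cost
  stays the same, every point was already at a nearest centroid, and since ties are broken towards
  the smallest index no index increases; so the sum of the cluster indices strictly decreases
  whenever the assignment changes. A lexicographically decreasing sequence over the finitely many
  assignments must stop.

  The substantial step is that the tropical median lies in \<open>FW(C)\<close>. Since \<open>d(s,-)\<close> is convex,
  \<open>FW(C)\<close> is convex and contains any mean of its points, so it suffices that the tropical vertices
  exist and are unique. For existence, the submodularity
  \<open>d(s, y \<sqinter> z) + d(s, y \<squnion> z) \<le> d(s, y) + d(s, z)\<close> makes \<open>FW(C)\<close> closed under coordinatewise
  minima; for each \<open>k\<close> the minimum over \<open>FW(C)\<close> of the points normalised by \<open>y\<^sub>k = 0\<close> is then a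
  point of \<open>FW(C)\<close>, and these \<open>n\<close> points generate \<open>FW(C)\<close> tropically. Uniqueness holds because a
  vertex that is not in another generating set is a tropical combination of the other vertices.\<close>

section \<open>The asymmetric tropical distance\<close>

abbreviation max_diff :: "real^'n \<Rightarrow> real^'n \<Rightarrow> real" where
  "max_diff x y \<equiv> Max (range (\<lambda>i. x$i - y$i))"

abbreviation min_diff :: "real^'n \<Rightarrow> real^'n \<Rightarrow> real" where
  "min_diff y v \<equiv> Min (range (\<lambda>i. y$i - v$i))"

lemma diff_le_max_diff: "x$i - y$i \<le> max_diff x y"
  by (rule Max_ge) auto

lemma max_diff_le: "(\<And>i. x$i - y$i \<le> c) \<Longrightarrow> max_diff x y \<le> c"
  by (rule Max.boundedI) auto

lemma min_diff_le: "min_diff y v \<le> y$i - v$i"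
  by (rule Min_le) auto

lemma le_min_diff: "(\<And>i. c \<le> y$i - v$i) \<Longrightarrow> c \<le> min_diff y v"
  by (rule Min.boundedI) auto

lemma trop_dist_eq_sum: "trop_dist x y = (\<Sum>i\<in>UNIV. max_diff x y - (x$i - y$i))"
  by (simp add: trop_dist_def sum_subtractf algebra_simps sum.distrib)

lemma trop_dist_nonneg: "0 \<le> trop_dist x y"
  unfolding trop_dist_eq_sum by (rule sum_nonneg) (use diff_le_max_diff in auto)

lemma diff_diff_le_trop_dist: "(x$i - y$i) - (x$j - y$j) \<le> trop_dist x y"
proof -
  have "(x$i - y$i) - (x$j - y$j) \<le> max_diff x y - (x$j - y$j)"
    using diff_le_max_diff[of x i y] by simp
  also have "\<dots> \<le> trop_dist x y"
    unfolding trop_dist_eq_sum by (rule member_le_sum) (use diff_le_max_diff in auto)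
  finally show ?thesis .
qed

lemma trop_dist_shift [simp]: "trop_dist x (y + a *\<^sub>R one_vec) = trop_dist x y"
proof -
  have "(\<lambda>i. x$i - (y + a *\<^sub>R one_vec)$i) = (\<lambda>i. (x$i - y$i) + (-a))"
    by (auto simp: one_vec_def)
  then have "max_diff x (y + a *\<^sub>R one_vec) = max_diff x y - a"
    using Max_add_commute[of "UNIV::'a set" "\<lambda>i. x$i - y$i" "-a"] by (simp only:) simp
  then have summand: "max_diff x (y + a *\<^sub>R one_vec) - (x$i - (y + a *\<^sub>R one_vec)$i)
      = max_diff x y - (x$i - y$i)" for i
    by (simp add: one_vec_def)
  show ?thesis
    unfolding trop_dist_eq_sum by (rule sum.cong[OF refl summand])
qed

lemma continuous_on_Max:
  fixes g :: "'i \<Rightarrow> 'a::topological_space \<Rightarrow> real"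
  assumes "finite I" "I \<noteq> {}" "\<And>i. i \<in> I \<Longrightarrow> continuous_on S (g i)"
  shows "continuous_on S (\<lambda>y. Max ((\<lambda>i. g i y) ` I))"
  using assms
proof (induction I rule: finite_ne_induct)
  case (insert i I)
  then have "continuous_on S (\<lambda>y. max (g i y) (Max ((\<lambda>i. g i y) ` I)))"
    by (intro continuous_on_max) auto
  with insert show ?case by simp
qed simp

lemma continuous_on_trop_dist: "continuous_on S (trop_dist x)"
  unfolding trop_dist_def by (intro continuous_intros continuous_on_Max) auto

lemma convex_on_trop_dist:
  fixes s :: "real^'n"
  shows "convex_on UNIV (trop_dist s)"
proof
  fix t :: real and x y :: "real^'n"
  assume t: "0 < t" "t < 1"
  let ?z = "(1 - t) *\<^sub>R x + t *\<^sub>R y"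
  have "max_diff s ?z \<le> (1 - t) * max_diff s x + t * max_diff s y"
  proof (rule max_diff_le)
    fix i
    have "s$i - ?z$i = (1 - t) * (s$i - x$i) + t * (s$i - y$i)"
      by (simp add: algebra_simps)
    also have "\<dots> \<le> (1 - t) * max_diff s x + t * max_diff s y"
      using t by (intro add_mono mult_left_mono diff_le_max_diff) auto
    finally show "s$i - ?z$i \<le> \<dots>" .
  qed
  then have "real CARD('n) * max_diff s ?z
      \<le> real CARD('n) * ((1 - t) * max_diff s x + t * max_diff s y)"
    by (rule mult_left_mono) simp
  moreover have "(\<Sum>i\<in>UNIV. ?z$i - s$i)
      = (1 - t) * (\<Sum>i\<in>UNIV. x$i - s$i) + t * (\<Sum>i\<in>UNIV. y$i - s$i)"
    by (simp add: sum_distrib_left sum.distrib[symmetric] algebra_simps)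
  ultimately show "trop_dist s ?z \<le> (1 - t) * trop_dist s x + t * trop_dist s y"
    unfolding trop_dist_def by (simp add: algebra_simps)
qed simp

section \<open>The Fermat--Weber set\<close>

definition fw_cost :: "(real^'n) set \<Rightarrow> real^'n \<Rightarrow> real" where
  "fw_cost C y = (\<Sum>s\<in>C. trop_dist s y)"

lemma FW_iff: "y \<in> FW C \<longleftrightarrow> (\<forall>z. fw_cost C y \<le> fw_cost C z)"
  by (simp add: FW_def fw_cost_def)

lemma fw_cost_shift [simp]: "fw_cost C (y + a *\<^sub>R one_vec) = fw_cost C y"
  by (simp add: fw_cost_def)

lemma FW_shift_iff [simp]: "y + a *\<^sub>R one_vec \<in> FW C \<longleftrightarrow> y \<in> FW C"
  by (simp add: FW_iff)

lemma continuous_on_fw_cost: "continuous_on S (fw_cost C)"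
  unfolding fw_cost_def by (intro continuous_intros continuous_on_trop_dist)

lemma closed_FW: "closed (FW C)"
proof -
  have "FW C = (\<Inter>z. {y. fw_cost C y \<le> fw_cost C z})"
    by (auto simp: FW_iff)
  then show ?thesis
    by (simp add: closed_INT closed_Collect_le continuous_on_fw_cost)
qed

lemma convex_on_fw_cost:
  fixes C :: "(real^'n) set"
  shows "convex_on UNIV (fw_cost C)"
proof
  fix t :: real and x y :: "real^'n"
  assume "0 < t" "t < 1"
  then have "trop_dist s ((1 - t) *\<^sub>R x + t *\<^sub>R y) \<le> (1 - t) * trop_dist s x + t * trop_dist s y"
    for s
    using convex_on_trop_dist[of s] by (simp add: convex_on_def)
  then show "fw_cost C ((1 - t) *\<^sub>R x + t *\<^sub>R y) \<le> (1 - t) * fw_cost C x + t * fw_cost C y"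
    unfolding fw_cost_def sum_distrib_left sum.distrib[symmetric] by (rule sum_mono)
qed simp

lemma convex_FW: "convex (FW C)"
proof (rule convexI)
  fix x y and u v :: real
  assume xy: "x \<in> FW C" "y \<in> FW C" and uv: "0 \<le> u" "0 \<le> v" "u + v = 1"
  show "u *\<^sub>R x + v *\<^sub>R y \<in> FW C"
    unfolding FW_iff
  proof
    fix z
    have "fw_cost C (u *\<^sub>R x + v *\<^sub>R y) \<le> u * fw_cost C x + v * fw_cost C y"
      using convex_on_fw_cost[of C] uv by (simp add: convex_on_def)
    also have "\<dots> \<le> u * fw_cost C z + v * fw_cost C z"
      using xy uv by (intro add_mono mult_left_mono) (auto simp: FW_iff)
    finally show "fw_cost C (u *\<^sub>R x + v *\<^sub>R y) \<le> fw_cost C z"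
      using uv by (simp add: distrib_right[symmetric])
  qed
qed

definition trop_normalize :: "real^'n \<Rightarrow> real^'n" where
  "trop_normalize y = y + (- (\<Sum>i\<in>UNIV. y$i) / real CARD('n)) *\<^sub>R one_vec"

lemma normalized_trop_normalize: "normalized (trop_normalize y)"
  by (simp add: normalized_def trop_normalize_def one_vec_def sum_subtractf)

lemma fw_cost_trop_normalize [simp]: "fw_cost C (trop_normalize y) = fw_cost C y"
  unfolding trop_normalize_def by (rule fw_cost_shift)

lemma trop_normalize_in_FW_iff [simp]: "trop_normalize y \<in> FW C \<longleftrightarrow> y \<in> FW C"
  unfolding trop_normalize_def by (rule FW_shift_iff)

lemma normalized_shift_eq:
  assumes "normalized v" "normalized (v + c *\<^sub>R one_vec)"
  shows "c = 0"
  using assms by (simp add: normalized_def one_vec_def sum.distrib)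

lemma coord_diff_le_fw_cost:
  assumes "finite C" "s \<in> C"
  shows "y$a - y$b \<le> fw_cost C y + s$a - s$b"
proof -
  have "(s$b - y$b) - (s$a - y$a) \<le> trop_dist s y"
    by (rule diff_diff_le_trop_dist)
  also have "\<dots> \<le> fw_cost C y"
    unfolding fw_cost_def using assms by (intro member_le_sum trop_dist_nonneg)
  finally show ?thesis by simp
qed

lemma normalized_coord_bound:
  fixes y :: "real^'n"
  assumes "normalized y" and diff: "\<And>a b. y$a - y$b \<le> R"
  shows "\<bar>y$j\<bar> \<le> R"
proof -
  have "real CARD('n) * y$j = (\<Sum>i\<in>UNIV. y$j - y$i)"
    using assms(1) by (simp add: normalized_def sum_subtractf)
  also have "\<dots> \<le> real CARD('n) * R"
    using sum_bounded_above[of UNIV "\<lambda>i. y$j - y$i" R] diff by simp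
  finally have "y$j \<le> R" by simp
  have "real CARD('n) * (- y$j) = (\<Sum>i\<in>UNIV. y$i - y$j)"
    using assms(1) by (simp add: normalized_def sum_subtractf)
  also have "\<dots> \<le> real CARD('n) * R"
    using sum_bounded_above[of UNIV "\<lambda>i. y$i - y$j" R] diff by simp
  finally have "- y$j \<le> R"
    by (rule mult_left_le_imp_le) simp
  with \<open>y$j \<le> R\<close> show ?thesis by linarith
qed

lemma compact_normalized_sublevel:
  fixes C :: "(real^'n) set"
  assumes "finite C" "s \<in> C"
  shows "compact {y. normalized y \<and> fw_cost C y \<le> B}"
  unfolding compact_eq_bounded_closed
proof
  define R where "R = B + 2 * (\<Sum>i\<in>UNIV. \<bar>s$i\<bar>)"
  have "\<bar>y$j\<bar> \<le> R" if "normalized y" "fw_cost C y \<le> B" for y :: "real^'n" and j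
  proof (rule normalized_coord_bound[OF \<open>normalized y\<close>])
    fix a b
    have "\<bar>s$a\<bar> \<le> (\<Sum>i\<in>UNIV. \<bar>s$i\<bar>)" "\<bar>s$b\<bar> \<le> (\<Sum>i\<in>UNIV. \<bar>s$i\<bar>)"
      by (rule member_le_sum; simp)+
    then show "y$a - y$b \<le> R"
      using coord_diff_le_fw_cost[OF assms, of y a b] that(2) unfolding R_def by linarith
  qed
  then have "{y. normalized y \<and> fw_cost C y \<le> B} \<subseteq> {(\<chi> i. - R) .. (\<chi> i. R)}"
    by (auto simp: less_eq_vec_def abs_le_iff minus_le_iff)
  then show "bounded {y. normalized y \<and> fw_cost C y \<le> B}"
    unfolding interval_cbox_cart using bounded_cbox bounded_subset by blast
  show "closed {y. normalized y \<and> fw_cost C y \<le> B}"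
    unfolding normalized_def
    by (intro closed_Collect_conj closed_Collect_eq closed_Collect_le continuous_intros
        continuous_on_fw_cost)
qed

lemma FW_nonempty:
  assumes "finite C" "C \<noteq> {}"
  shows "FW C \<noteq> {}"
proof -
  obtain s where s: "s \<in> C" using assms(2) by blast
  define K where "K = {y. normalized y \<and> fw_cost C y \<le> fw_cost C 0}"
  have "0 \<in> K" by (simp add: K_def normalized_def)
  then obtain m where "m \<in> K" and m: "\<forall>y\<in>K. fw_cost C m \<le> fw_cost C y"
    using continuous_attains_inf[OF compact_normalized_sublevel[OF assms(1) s]
        _ continuous_on_fw_cost] unfolding K_def by blast
  have "fw_cost C m \<le> fw_cost C z" for z
  proof (cases "fw_cost C z \<le> fw_cost C 0")
    case True
    then have "trop_normalize z \<in> K"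
      by (simp add: K_def normalized_trop_normalize)
    then show ?thesis
      using m by force
  next
    case False
    then show ?thesis using m \<open>0 \<in> K\<close> by force
  qed
  then have "m \<in> FW C" by (simp add: FW_iff)
  then show ?thesis by blast
qed

lemma FW_attains_min_coord_diff:
  fixes C :: "(real^'n) set"
  assumes "finite C" "C \<noteq> {}"
  obtains p where "p \<in> FW C" "\<And>q. q \<in> FW C \<Longrightarrow> p$j - p$k \<le> q$j - q$k"
proof -
  obtain s where s: "s \<in> C" using assms(2) by blast
  define K where "K = FW C \<inter> {y. normalized y}"
  have normalize_in_K: "trop_normalize q \<in> K" if "q \<in> FW C" for q
    using that by (simp add: K_def normalized_trop_normalize)
  then have "K \<noteq> {}" using FW_nonempty[OF assms] by blast
  moreover have "compact K"
  proof -
    have "K \<subseteq> {y. normalized y \<and> fw_cost C y \<le> fw_cost C 0}"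
      by (auto simp: K_def FW_iff)
    moreover have "closed K"
      unfolding K_def normalized_def
      by (intro closed_Int closed_FW closed_Collect_eq continuous_intros)
    ultimately show ?thesis
      using compact_normalized_sublevel[OF assms(1) s] compact_Int_closed inf.absorb_iff2
      by metis
  qed
  moreover have "continuous_on K (\<lambda>q. q$j - q$k)"
    by (intro continuous_intros)
  ultimately obtain p where "p \<in> K" and p: "\<forall>q\<in>K. p$j - p$k \<le> q$j - q$k"
    using continuous_attains_inf by blast
  show ?thesis
  proof (rule that)
    show "p \<in> FW C" using \<open>p \<in> K\<close> by (simp add: K_def)
    fix q assume "q \<in> FW C"
    then have "p$j - p$k \<le> trop_normalize q $ j - trop_normalize q $ k"
      using p normalize_in_K by blast
    then show "p$j - p$k \<le> q$j - q$k"
      by (simp add: trop_normalize_def one_vec_def)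
  qed
qed

definition coord_min :: "real^'n \<Rightarrow> real^'n \<Rightarrow> real^'n" where
  "coord_min y z = (\<chi> i. min (y$i) (z$i))"

definition coord_max :: "real^'n \<Rightarrow> real^'n \<Rightarrow> real^'n" where
  "coord_max y z = (\<chi> i. max (y$i) (z$i))"

lemma trop_dist_submodular:
  fixes s :: "real^'n"
  shows "trop_dist s (coord_min y z) + trop_dist s (coord_max y z) \<le> trop_dist s y + trop_dist s z"
proof -
  have linear_part: "(\<Sum>i\<in>UNIV. coord_min y z $ i - s$i) + (\<Sum>i\<in>UNIV. coord_max y z $ i - s$i)
      = (\<Sum>i\<in>UNIV. y$i - s$i) + (\<Sum>i\<in>UNIV. z$i - s$i)"
    unfolding sum.distrib[symmetric] by (rule sum.cong) (auto simp: coord_min_def coord_max_def)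
  have max_min: "max_diff s (coord_min y z) \<le> max (max_diff s y) (max_diff s z)"
  proof (rule max_diff_le)
    fix i
    have "s$i - coord_min y z $ i = max (s$i - y$i) (s$i - z$i)"
      by (auto simp: coord_min_def min_def max_def)
    then show "s$i - coord_min y z $ i \<le> max (max_diff s y) (max_diff s z)"
      using max.mono[OF diff_le_max_diff diff_le_max_diff] by simp
  qed
  have max_max: "max_diff s (coord_max y z) \<le> min (max_diff s y) (max_diff s z)"
  proof (rule max_diff_le)
    fix i
    have "s$i - coord_max y z $ i = min (s$i - y$i) (s$i - z$i)"
      by (auto simp: coord_max_def min_def max_def)
    then show "s$i - coord_max y z $ i \<le> min (max_diff s y) (max_diff s z)"
      using min.mono[OF diff_le_max_diff diff_le_max_diff] by simp
  qed
  have "max_diff s (coord_min y z) + max_diff s (coord_max y z) \<le> max_diff s y + max_diff s z"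
    using add_mono[OF max_min max_max] by (simp only: max_def min_def split: if_splits)
  then have "real CARD('n) * (max_diff s (coord_min y z) + max_diff s (coord_max y z))
      \<le> real CARD('n) * (max_diff s y + max_diff s z)"
    by (rule mult_left_mono) simp
  with linear_part show ?thesis
    unfolding trop_dist_def distrib_left by linarith
qed

lemma coord_min_in_FW:
  assumes "y \<in> FW C" "z \<in> FW C"
  shows "coord_min y z \<in> FW C"
proof -
  have "fw_cost C (coord_min y z) + fw_cost C (coord_max y z) \<le> fw_cost C y + fw_cost C z"
    unfolding fw_cost_def sum.distrib[symmetric] by (rule sum_mono) (rule trop_dist_submodular)
  moreover have "fw_cost C y \<le> fw_cost C (coord_max y z)"
    using assms(1) by (simp add: FW_iff)
  ultimately have "fw_cost C (coord_min y z) \<le> fw_cost C z" by linarith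
  with assms(2) show ?thesis
    unfolding FW_iff by (meson order_trans)
qed

lemma coord_Min_in_FW:
  assumes "finite J" "J \<noteq> {}" "\<And>j. j \<in> J \<Longrightarrow> P j \<in> FW C"
  shows "(\<chi> i. Min ((\<lambda>j. P j $ i) ` J)) \<in> FW C"
  using assms
proof (induction J rule: finite_ne_induct)
  case (singleton j)
  then show ?case by (simp add: vec_eq_iff[symmetric])
next
  case (insert j J)
  then have "(\<chi> i. Min ((\<lambda>j. P j $ i) ` insert j J)) = coord_min (P j) (\<chi> i. Min ((\<lambda>j. P j $ i) ` J))"
    by (simp add: vec_eq_iff coord_min_def)
  with insert show ?case by (simp add: coord_min_in_FW)
qed

section \<open>Tropical combinations\<close>

text \<open>\<open>v + min_diff y v *\<^sub>R one_vec\<close> is the largest shift of \<open>v\<close> below \<open>y\<close>; it is tight at \<open>j\<close> if it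
  touches \<open>y\<close> in coordinate \<open>j\<close>.\<close>

definition tight_at :: "real^'n \<Rightarrow> real^'n \<Rightarrow> 'n \<Rightarrow> bool" where
  "tight_at v y j \<longleftrightarrow> v$j + min_diff y v = y$j"

lemma tight_atI:
  assumes "\<And>i. v$i + c \<le> y$i" and "y$j \<le> v$j + c"
  shows "tight_at v y j"
proof -
  have "c \<le> min_diff y v"
    by (rule le_min_diff) (use assms(1) in \<open>simp add: algebra_simps\<close>)
  then show ?thesis
    unfolding tight_at_def using assms(2) min_diff_le[of y v j] by linarith
qed

lemma tight_at_trans:
  assumes "tight_at u w j" "tight_at w y j"
  shows "tight_at u y j"
proof (rule tight_atI)
  show "u$i + (min_diff w u + min_diff y w) \<le> y$i" for i
    using min_diff_le[of w u i] min_diff_le[of y w i] by linarith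
  show "y$j \<le> u$j + (min_diff w u + min_diff y w)"
    using assms unfolding tight_at_def by linarith
qed

lemma tight_at_shift [simp]: "tight_at (v + a *\<^sub>R one_vec) y j \<longleftrightarrow> tight_at v y j"
proof -
  have "(\<lambda>i. y$i - (v + a *\<^sub>R one_vec)$i) = (\<lambda>i. (y$i - v$i) + (-a))"
    by (auto simp: one_vec_def)
  then have "min_diff y (v + a *\<^sub>R one_vec) = min_diff y v - a"
    using Min_add_commute[of "UNIV::'a set" "\<lambda>i. y$i - v$i" "-a"] by (simp only:) simp
  moreover have "(v + a *\<^sub>R one_vec) $ j = v$j + a"
    by (simp add: one_vec_def)
  ultimately show ?thesis
    unfolding tight_at_def by (simp only:) simp
qed

lemma tight_at_antisym:
  assumes "tight_at v w j" "tight_at w v j"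
  obtains c where "w = v + c *\<^sub>R one_vec"
proof
  define c where "c = min_diff w v"
  have "c + min_diff v w = 0"
    using assms unfolding tight_at_def c_def by linarith
  then have "w$i = v$i + c" for i
    using min_diff_le[of w v i] min_diff_le[of v w i] unfolding c_def by linarith
  then show "w = v + c *\<^sub>R one_vec"
    by (simp add: vec_eq_iff one_vec_def)
qed

lemma trop_comb_iff_tight_at:
  assumes "finite V"
  shows "trop_comb V y \<longleftrightarrow> V \<noteq> {} \<and> (\<forall>j. \<exists>v\<in>V. tight_at v y j)"
proof
  assume "trop_comb V y"
  then obtain lam where "V \<noteq> {}" and lam: "\<And>i. y$i = Max ((\<lambda>v. v$i + lam v) ` V)"
    unfolding trop_comb_def by auto
  have below: "v$i + lam v \<le> y$i" if "v \<in> V" for v i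
    unfolding lam[of i] using assms that by (intro Max_ge) auto
  have "\<exists>v\<in>V. tight_at v y j" for j
  proof -
    have "y$j \<in> (\<lambda>v. v$j + lam v) ` V"
      unfolding lam[of j] using assms \<open>V \<noteq> {}\<close> by (intro Max_in) auto
    then obtain v where "v \<in> V" and attained: "y$j = v$j + lam v" by blast
    have "tight_at v y j"
      by (rule tight_atI[of v "lam v"]) (use below[OF \<open>v \<in> V\<close>] attained in auto)
    with \<open>v \<in> V\<close> show ?thesis ..
  qed
  with \<open>V \<noteq> {}\<close> show "V \<noteq> {} \<and> (\<forall>j. \<exists>v\<in>V. tight_at v y j)" by blast
next
  assume tight: "V \<noteq> {} \<and> (\<forall>j. \<exists>v\<in>V. tight_at v y j)"
  have max_form: "y$i = Max ((\<lambda>v. v$i + min_diff y v) ` V)" for i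
  proof (rule sym, rule Max_eqI)
    show "a \<le> y$i" if "a \<in> (\<lambda>v. v$i + min_diff y v) ` V" for a
    proof -
      from that obtain v where "a = v$i + min_diff y v" by blast
      then show ?thesis using min_diff_le[of y v i] by linarith
    qed
    obtain v where "v \<in> V" "tight_at v y i" using tight by blast
    then show "y$i \<in> (\<lambda>v. v$i + min_diff y v) ` V"
      by (intro image_eqI[of _ _ v]) (simp_all add: tight_at_def)
  qed (use assms in simp)
  show "trop_comb V y"
    unfolding trop_comb_def
    by (intro conjI exI[of _ "min_diff y"] allI) (use tight in blast, rule max_form)
qed

section \<open>Tropical vertices and the tropical median\<close>

lemma FW_generator:
  fixes C :: "(real^'n) set"
  assumes "finite C" "C \<noteq> {}"
  obtains g where "g \<in> FW C" "g$k = 0" "\<And>y i. y \<in> FW C \<Longrightarrow> g$i + y$k \<le> y$i"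
proof -
  have "\<exists>p. p \<in> FW C \<and> (\<forall>q\<in>FW C. p$i - p$k \<le> q$i - q$k)" for i
    by (rule FW_attains_min_coord_diff[OF assms, where j=i and k=k]) blast
  then obtain p where p_FW: "\<And>i. p i \<in> FW C"
    and p_min: "\<And>i q. q \<in> FW C \<Longrightarrow> p i $ i - p i $ k \<le> q$i - q$k"
    by metis
  define g where "g = (\<chi> i. Min (range (\<lambda>j. (p j + (- p j $ k) *\<^sub>R one_vec) $ i)))"
  show thesis
  proof (rule that)
    have "p j + (- p j $ k) *\<^sub>R one_vec \<in> FW C" for j
      using p_FW by (simp only: FW_shift_iff)
    then show "g \<in> FW C"
      unfolding g_def by (intro coord_Min_in_FW) auto
    show "g$k = 0"
      by (simp add: g_def one_vec_def)
    fix y i assume "y \<in> FW C"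
    have "g$i \<le> (p i + (- p i $ k) *\<^sub>R one_vec) $ i"
      unfolding g_def by (simp add: Min_le)
    with p_min[OF \<open>y \<in> FW C\<close>, of i] show "g$i + y$k \<le> y$i"
      by (simp add: one_vec_def)
  qed
qed

lemma trop_comb_of_generators:
  fixes g :: "'n \<Rightarrow> real^'n"
  assumes "\<And>k. g k $ k = 0" "\<And>k i. g k $ i + y$k \<le> y$i"
  shows "trop_comb (range g) y"
proof -
  have "tight_at (g j) y j" for j
    by (rule tight_atI[of _ "y$j"]) (simp_all add: assms)
  then show ?thesis
    by (auto simp: trop_comb_iff_tight_at)
qed

lemma trop_comb_trop_normalize:
  assumes "finite V" "trop_comb V y"
  shows "trop_comb (trop_normalize ` V) y"
  \<comment> \<open>Keeping \<open>(- c) *\<^sub>R one_vec\<close> unsimplified lets \<open>tight_at_shift\<close> apply.\<close>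
  using assms by (auto simp: trop_comb_iff_tight_at trop_normalize_def simp del: scaleR_minus_left)

lemma ex_trop_vertex_set:
  assumes "finite G" "G \<subseteq> A" "\<forall>v\<in>G. normalized v" "\<forall>y\<in>A. trop_comb G y"
  shows "\<exists>V. is_trop_vertex_set A V"
proof -
  define P where "P W \<longleftrightarrow> W \<subseteq> G \<and> (\<forall>y\<in>A. trop_comb W y)" for W
  have "P G" using assms(4) by (simp add: P_def)
  then obtain V where "P V" and V_min: "\<And>W. P W \<Longrightarrow> card V \<le> card W"
    using arg_min_nat_lemma[of P G card] by blast
  then have "V \<subseteq> G" "\<forall>y\<in>A. trop_comb V y"
    by (simp_all add: P_def)
  have "finite V"
    using \<open>V \<subseteq> G\<close> assms(1) by (rule finite_subset)
  have "\<not> (\<forall>y\<in>A. trop_comb W y)" if "W \<subset> V" for W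
  proof
    assume "\<forall>y\<in>A. trop_comb W y"
    with \<open>W \<subset> V\<close> \<open>V \<subseteq> G\<close> have "card V \<le> card W"
      by (intro V_min) (auto simp: P_def)
    with psubset_card_mono[OF \<open>finite V\<close> \<open>W \<subset> V\<close>] show False
      by simp
  qed
  moreover have "V \<subseteq> A" "\<forall>v\<in>V. normalized v"
    using \<open>V \<subseteq> G\<close> assms(2,3) by auto
  ultimately have "is_trop_vertex_set A V"
    unfolding is_trop_vertex_set_def using \<open>finite V\<close> \<open>\<forall>y\<in>A. trop_comb V y\<close> by simp
  then show ?thesis ..
qed

lemma ex_trop_vertex_set_FW:
  fixes C :: "(real^'n) set"
  assumes "finite C" "C \<noteq> {}"
  shows "\<exists>V. is_trop_vertex_set (FW C) V"
proof -
  have "\<exists>g. g \<in> FW C \<and> g$k = 0 \<and> (\<forall>y\<in>FW C. \<forall>i. g$i + y$k \<le> y$i)" for k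
    by (rule FW_generator[OF assms, of k]) blast
  then obtain g where g_FW: "\<And>k. g k \<in> FW C" and g_diag: "\<And>k. g k $ k = 0"
    and g_below: "\<And>k y i. y \<in> FW C \<Longrightarrow> g k $ i + y$k \<le> y$i"
    by metis
  show ?thesis
  proof (rule ex_trop_vertex_set)
    show "trop_normalize ` range g \<subseteq> FW C"
      using g_FW by auto
    show "\<forall>v\<in>trop_normalize ` range g. normalized v"
      by (auto simp: normalized_trop_normalize)
    show "\<forall>y\<in>FW C. trop_comb (trop_normalize ` range g) y"
    proof
      fix y assume "y \<in> FW C"
      then have "trop_comb (range g) y"
        using g_diag g_below by (intro trop_comb_of_generators)
      then show "trop_comb (trop_normalize ` range g) y"
        by (intro trop_comb_trop_normalize) simp_all
    qed
  qed simp
qed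

lemma trop_comb_remove:
  assumes "finite V" "trop_comb V y" and redundant: "\<forall>j. \<exists>u\<in>V - {v}. tight_at u v j"
  shows "trop_comb (V - {v}) y"
proof -
  have "\<exists>u\<in>V - {v}. tight_at u y j" for j
  proof -
    obtain x where "x \<in> V" "tight_at x y j"
      using assms(1,2) by (auto simp: trop_comb_iff_tight_at)
    moreover obtain u where "u \<in> V - {v}" "tight_at u v j"
      using redundant by blast
    ultimately show ?thesis
      by (cases "x = v") (auto intro: tight_at_trans)
  qed
  then show ?thesis
    using assms(1) by (auto simp: trop_comb_iff_tight_at)
qed

lemma is_trop_vertex_setD:
  assumes "is_trop_vertex_set A V"
  shows "finite V" "V \<subseteq> A" "\<And>v. v \<in> V \<Longrightarrow> normalized v"
    "\<And>y. y \<in> A \<Longrightarrow> trop_comb V y" "\<And>W. W \<subset> V \<Longrightarrow> \<exists>y\<in>A. \<not> trop_comb W y"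
  using assms unfolding is_trop_vertex_set_def by blast+

lemma trop_vertex_set_subset:
  assumes V: "is_trop_vertex_set A V" and W: "is_trop_vertex_set A W"
  shows "V \<subseteq> W"
proof
  fix v assume "v \<in> V"
  show "v \<in> W"
  proof (rule ccontr)
    assume "v \<notin> W"
    have "\<exists>u\<in>V - {v}. tight_at u v j" for j
    proof -
      have "trop_comb W v"
        using \<open>v \<in> V\<close> by (intro is_trop_vertex_setD(4)[OF W] set_mp[OF is_trop_vertex_setD(2)[OF V]])
      then obtain w where "w \<in> W" and wv: "tight_at w v j"
        using is_trop_vertex_setD(1)[OF W] by (auto simp: trop_comb_iff_tight_at)
      have "trop_comb V w"
        using \<open>w \<in> W\<close> by (intro is_trop_vertex_setD(4)[OF V] set_mp[OF is_trop_vertex_setD(2)[OF W]])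
      then obtain u where "u \<in> V" and uw: "tight_at u w j"
        using is_trop_vertex_setD(1)[OF V] by (auto simp: trop_comb_iff_tight_at)
      have "u \<noteq> v"
      proof
        assume "u = v"
        then obtain c where wc: "w = v + c *\<^sub>R one_vec"
          using tight_at_antisym[OF _ wv] uw by blast
        have "normalized v" "normalized w"
          using \<open>v \<in> V\<close> \<open>w \<in> W\<close> is_trop_vertex_setD(3) V W by blast+
        then have "c = 0"
          unfolding wc by (rule normalized_shift_eq)
        with wc \<open>w \<in> W\<close> \<open>v \<notin> W\<close> show False by simp
      qed
      with \<open>u \<in> V\<close> tight_at_trans[OF uw wv] show ?thesis by blast
    qed
    then have "trop_comb (V - {v}) y" if "y \<in> A" for y
      using trop_comb_remove is_trop_vertex_setD(1,4)[OF V] that by blast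
    moreover have "V - {v} \<subset> V" using \<open>v \<in> V\<close> by blast
    ultimately show False
      using is_trop_vertex_setD(5)[OF V] by blast
  qed
qed

lemma is_trop_vertex_set_trop_vertices:
  assumes "is_trop_vertex_set A V"
  shows "is_trop_vertex_set A (trop_vertices A)"
  unfolding trop_vertices_def
  by (rule theI[of _ V]) (use assms trop_vertex_set_subset in \<open>blast intro: subset_antisym\<close>)+

lemma trop_median_in_FW:
  fixes C :: "(real^'n) set"
  assumes "finite C" "C \<noteq> {}"
  shows "trop_median C \<in> FW C"
proof -
  define V where "V = trop_vertices (FW C)"
  have "is_trop_vertex_set (FW C) V"
    unfolding V_def using ex_trop_vertex_set_FW[OF assms] is_trop_vertex_set_trop_vertices by blast
  note V = is_trop_vertex_setD[OF this]
  obtain y where "y \<in> FW C" using FW_nonempty[OF assms] by blast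
  then have "V \<noteq> {}"
    using V(4) by (auto simp: trop_comb_def)
  have "trop_median C = (\<Sum>v\<in>V. (1 / real (card V)) *\<^sub>R v)"
    by (simp add: trop_median_def V_def scaleR_sum_right Let_def)
  also have "\<dots> \<in> FW C"
    using V(1,2) \<open>V \<noteq> {}\<close> by (intro convex_sum convex_FW) auto
  finally show ?thesis .
qed

section \<open>Termination of tropical k-means\<close>

lemma finite_range_no_descending_chain:
  assumes "trans r" "irrefl r" "finite (range f)"
  obtains t where "(f (Suc t), f t) \<notin> r"
proof -
  have "acyclic r"
    using assms(1,2) by (simp add: acyclic_irrefl)
  then have "wf (r \<inter> range f \<times> range f)"
    using assms(3) by (intro finite_acyclic_wf) (auto elim: acyclic_subset)
  then obtain t where "(f (Suc t), f t) \<notin> r \<inter> range f \<times> range f"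
    by (rule wf_no_infinite_down_chainE)
  then show thesis
    using that by blast
qed

lemma assign_minimizes:
  assumes "0 < k"
  shows "assign k c s < k" and "\<And>i. i < k \<Longrightarrow> trop_dist s (c (assign k c s)) \<le> trop_dist s (c i)"
proof -
  define m where "m = Min ((\<lambda>i. trop_dist s (c i)) ` {..<k})"
  have "m \<in> (\<lambda>i. trop_dist s (c i)) ` {..<k}"
    unfolding m_def using assms by (intro Min_in) auto
  then obtain j where "j < k" "trop_dist s (c j) = m" by auto
  then have "\<exists>j. j < k \<and> (\<forall>i<k. trop_dist s (c j) \<le> trop_dist s (c i))"
    unfolding m_def by (auto intro: Min_le)
  then have "assign k c s < k \<and> (\<forall>i<k. trop_dist s (c (assign k c s)) \<le> trop_dist s (c i))"
    unfolding assign_def by (rule LeastI_ex)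
  then show "assign k c s < k" "\<And>i. i < k \<Longrightarrow> trop_dist s (c (assign k c s)) \<le> trop_dist s (c i)"
    by blast+
qed

lemma assign_le:
  assumes "j < k" "\<And>i. i < k \<Longrightarrow> trop_dist s (c j) \<le> trop_dist s (c i)"
  shows "assign k c s \<le> j"
  unfolding assign_def using assms by (intro Least_le) blast

lemma kmeans_step_assign:
  assumes "0 < k" "s \<in> S"
  shows "kmeans_step S k c (assign k c s) = trop_median {x\<in>S. assign k c x = assign k c s}"
proof -
  have "assign k c s < k" "cluster S k c (assign k c s) \<noteq> {}"
    using assign_minimizes(1)[OF assms(1)] assms(2) by (auto simp: cluster_def)
  then show ?thesis
    by (simp add: kmeans_step_def cluster_def)
qed

lemma kmeans_step_cost_le:
  fixes S :: "(real^'n) set"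
  assumes "finite S" "0 < k"
  shows "(\<Sum>s\<in>S. trop_dist s (kmeans_step S k c (assign k c s))) \<le> (\<Sum>s\<in>S. trop_dist s (c (assign k c s)))"
proof -
  let ?a = "assign k c" and ?C = "\<lambda>j. {x\<in>S. assign k c x = j}"
  have assign_range: "?a ` S \<subseteq> {..<k}"
    using assign_minimizes(1)[OF assms(2)] by blast
  have cluster_cost: "(\<Sum>s\<in>?C j. trop_dist s (kmeans_step S k c (?a s))) \<le> (\<Sum>s\<in>?C j. trop_dist s (c (?a s)))"
    if "j < k" for j
  proof (cases "?C j = {}")
    case False
    have "(\<Sum>s\<in>?C j. trop_dist s (kmeans_step S k c (?a s))) = fw_cost (?C j) (trop_median (?C j))"
      using False \<open>j < k\<close> by (simp add: fw_cost_def kmeans_step_def cluster_def)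
    also have "\<dots> \<le> fw_cost (?C j) (c j)"
      using trop_median_in_FW[of "?C j"] False assms(1) by (simp add: FW_iff)
    also have "\<dots> = (\<Sum>s\<in>?C j. trop_dist s (c (?a s)))"
      by (simp add: fw_cost_def)
    finally show ?thesis .
  qed (simp only: sum.empty order_refl)
  have "(\<Sum>s\<in>S. trop_dist s (kmeans_step S k c (?a s)))
      = (\<Sum>j<k. \<Sum>s\<in>?C j. trop_dist s (kmeans_step S k c (?a s)))"
    by (rule sum.group[symmetric, OF assms(1) finite_lessThan assign_range])
  also have "\<dots> \<le> (\<Sum>j<k. \<Sum>s\<in>?C j. trop_dist s (c (?a s)))"
    by (rule sum_mono) (use cluster_cost in simp)
  also have "\<dots> = (\<Sum>s\<in>S. trop_dist s (c (?a s)))"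
    by (rule sum.group[OF assms(1) finite_lessThan assign_range])
  finally show ?thesis .
qed

definition clustering_cost :: "(real^'n) set \<Rightarrow> (real^'n \<Rightarrow> nat) \<Rightarrow> real" where
  "clustering_cost S b = (\<Sum>s\<in>S. trop_dist s (trop_median {x\<in>S. b x = b s}))"

lemma clustering_cost_restrict [simp]: "clustering_cost S (restrict b S) = clustering_cost S b"
proof -
  have "{x\<in>S. restrict b S x = restrict b S s} = {x\<in>S. b x = b s}" if "s \<in> S" for s
    using that by auto
  then show ?thesis
    unfolding clustering_cost_def by (intro sum.cong) auto
qed

lemma clustering_cost_assign:
  assumes "0 < k"
  shows "clustering_cost S (assign k c) = (\<Sum>s\<in>S. trop_dist s (kmeans_step S k c (assign k c s)))"
  unfolding clustering_cost_def by (intro sum.cong) (simp_all add: kmeans_step_assign[OF assms])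

definition kmeans_potential :: "(real^'n) set \<Rightarrow> nat \<Rightarrow> (nat \<Rightarrow> real^'n) \<Rightarrow> real \<times> nat" where
  "kmeans_potential S k c = (clustering_cost S (assign k c), \<Sum>s\<in>S. assign k c s)"

definition potential_order :: "((real \<times> nat) \<times> (real \<times> nat)) set" where
  "potential_order = {(x, y). x < y} <*lex*> less_than"

lemma trans_potential_order: "trans potential_order"
  unfolding potential_order_def by (intro trans_lex_prod trans_less_than) (auto simp: trans_def)

lemma irrefl_potential_order: "irrefl potential_order"
  unfolding potential_order_def by (intro irrefl_lex_prod irrefl_less_than) (auto simp: irrefl_def)

lemma finite_kmeans_potential_image:
  assumes "finite S" "0 < k"
  shows "finite (kmeans_potential S k ` C)"
proof (rule finite_subset)
  show "kmeans_potential S k ` C \<subseteq> (\<lambda>b. (clustering_cost S b, \<Sum>s\<in>S. b s)) ` (S \<rightarrow>\<^sub>E {..<k})"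
  proof
    fix p assume "p \<in> kmeans_potential S k ` C"
    then obtain c where "p = kmeans_potential S k c" by blast
    moreover have "restrict (assign k c) S \<in> S \<rightarrow>\<^sub>E {..<k}"
      using assign_minimizes(1)[OF assms(2)] by auto
    ultimately show "p \<in> (\<lambda>b. (clustering_cost S b, \<Sum>s\<in>S. b s)) ` (S \<rightarrow>\<^sub>E {..<k})"
      unfolding kmeans_potential_def by (intro image_eqI[of _ _ "restrict (assign k c) S"]) auto
  qed
qed (use assms(1) in \<open>simp add: finite_PiE\<close>)

lemma kmeans_round_descends:
  fixes S :: "(real^'n) set" and c :: "nat \<Rightarrow> real^'n"
  assumes "finite S" "0 < k"
  defines "c' \<equiv> kmeans_step S k c"
  assumes changed: "\<exists>s\<in>S. assign k c' s \<noteq> assign k c s"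
  shows "(kmeans_potential S k c', kmeans_potential S k c) \<in> potential_order"
proof -
  let ?a = "assign k c" and ?a' = "assign k c'"
  define X where "X = (\<Sum>s\<in>S. trop_dist s (c' (?a' s)))"
  define Y where "Y = (\<Sum>s\<in>S. trop_dist s (c' (?a s)))"
  have a_lt: "?a s < k" for s
    using assign_minimizes(1)[OF assms(2)] .
  have reassign: "trop_dist s (c' (?a' s)) \<le> trop_dist s (c' (?a s))" for s
    using assign_minimizes(2)[OF assms(2) a_lt] .
  have "clustering_cost S ?a' \<le> X"
    unfolding clustering_cost_assign[OF assms(2)] X_def by (rule kmeans_step_cost_le[OF assms(1,2)])
  moreover have "X \<le> Y"
    unfolding X_def Y_def by (intro sum_mono reassign)
  moreover have "Y = clustering_cost S ?a"
    unfolding clustering_cost_assign[OF assms(2)] Y_def c'_def ..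
  moreover have "(\<Sum>s\<in>S. ?a' s) < (\<Sum>s\<in>S. ?a s)" if "X = Y"
  proof -
    have "?a' s \<le> ?a s" if "s \<in> S" for s
    proof (rule assign_le[OF a_lt])
      fix i assume "i < k"
      have "trop_dist s (c' (?a s)) = trop_dist s (c' (?a' s))"
        using sum_mono_inv[OF \<open>X = Y\<close>[unfolded X_def Y_def] reassign \<open>s \<in> S\<close> assms(1)] by simp
      also have "\<dots> \<le> trop_dist s (c' i)"
        using assign_minimizes(2)[OF assms(2) \<open>i < k\<close>] .
      finally show "trop_dist s (c' (?a s)) \<le> trop_dist s (c' i)" .
    qed
    with changed show ?thesis
      by (intro sum_strict_mono_ex1[OF assms(1)]) (auto simp: order.strict_iff_order)
  qed
  ultimately show ?thesis
    unfolding kmeans_potential_def potential_order_def by auto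
qed

lemma centroids_Suc: "centroids S k c0 (Suc t) = kmeans_step S k (centroids S k c0 t)"
  by (simp add: centroids_def)

theorem mainTheorem2:
  fixes S :: "(real^'n) set" and k :: nat and c0 :: "nat \<Rightarrow> real^'n"
  assumes "finite S"
    and "\<forall>x\<in>S. \<forall>y\<in>S. (\<exists>a::real. y = x + a *\<^sub>R one_vec) \<longrightarrow> x = y"
    and "0 < k" and "k \<le> card S"
  shows "kmeans_terminates S k c0"
proof -
  let ?potential = "\<lambda>t. kmeans_potential S k (centroids S k c0 t)"
  have "finite (range ?potential)"
    using finite_kmeans_potential_image[OF assms(1,3), of "range (centroids S k c0)"]
    by (simp add: image_image)
  then obtain t where "(?potential (Suc t), ?potential t) \<notin> potential_order"
    by (rule finite_range_no_descending_chain[OF trans_potential_order irrefl_potential_order])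
  then show ?thesis
    using kmeans_round_descends[OF assms(1,3), of "centroids S k c0 t"]
    unfolding kmeans_terminates_def centroids_Suc by blast
qed

end
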